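(* Let $x,y\in\mathbf S^3$ be distinct, and let $w\in\mathbb{C}^3$ be any representative of $\pi_x(y)$. Then \[\frac{\langle w,w\rangle}{\|w\|^2}=-\frac{|\langle x,y\rangle|^2}{\|x\wedge y\|^2},\] for any representatives $x,y\in\mathbb{C}^3$.
   Context: On $\mathbb{C}^3$: $u\cdot v=\sum u_i\bar v_i$, $\|u\|=\sqrt{u\cdot u}$, $\langle u,v\rangle=u_0\bar v_0-u_1\bar v_1-u_2\bar v_2$, $\|u\wedge v\|^2=\|u\|^2\|v\|^2-|u\cdot v|^2$. $\mathbf S^3=\{u\in\mathbb P^2_{\mathbb C}:\langle u,u\rangle=0\}$. For $w$, $w^\perp=\{u:\langle u,w\rangle=0\}$ (a projective line). For $x\in\mathbf S^3$ and $y\in\mathbf S^3\setminus\{x\}$, $\pi_x(y)$ is the unique intersection point of the projective lines $x^\perp$ and $y^\perp$. *)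

theory Defs
  imports "HOL-Analysis.Analysis"
begin

definition hdot :: "complex^3 \<Rightarrow> complex^3 \<Rightarrow> complex" where
  "hdot u v = (\<Sum>i\<in>UNIV. u $ i * cnj (v $ i))"

definition herm :: "complex^3 \<Rightarrow> complex^3 \<Rightarrow> complex" where
  "herm u v = u $ 0 * cnj (v $ 0) - u $ 1 * cnj (v $ 1) - u $ 2 * cnj (v $ 2)"

definition wedge_norm_sq :: "complex^3 \<Rightarrow> complex^3 \<Rightarrow> real" where
  "wedge_norm_sq u v = (norm u)\<^sup>2 * (norm v)\<^sup>2 - (cmod (hdot u v))\<^sup>2"

definition proj_eq :: "complex^3 \<Rightarrow> complex^3 \<Rightarrow> bool" where
  "proj_eq u v \<longleftrightarrow> (\<exists>c. c \<noteq> 0 \<and> u = c *s v)"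

text \<open>Representatives of points of \<open>S\<^sup>3\<close>.\<close>
definition S3_reps :: "(complex^3) set" where
  "S3_reps = {u. u \<noteq> 0 \<and> herm u u = 0}"

text \<open>Representatives of points of the projective line \<open>w\<^sup>\<perp>\<close>.\<close>
definition perp_reps :: "complex^3 \<Rightarrow> (complex^3) set" where
  "perp_reps w = {u. u \<noteq> 0 \<and> herm u w = 0}"

text \<open>\<open>w\<close> represents \<open>\<pi>_x(y)\<close>: a representative of a (the unique) intersection point of
  the projective lines \<open>x\<^sup>\<perp>\<close> and \<open>y\<^sup>\<perp>\<close>.\<close>
definition pi_rep :: "complex^3 \<Rightarrow> complex^3 \<Rightarrow> complex^3 \<Rightarrow> bool" where
  "pi_rep x y w \<longleftrightarrow> w \<in> perp_reps x \<inter> perp_reps y"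

end

theory Submission
  imports Defs
begin

text \<open>Let \<open>z = x \<times> y\<close> be the bilinear cross product and \<open>J = diag(1,-1,-1)\<close>. A vector
  orthogonal to \<open>x\<close> and \<open>y\<close> for \<open>\<langle>-,-\<rangle>\<close> is a multiple of \<open>J z\<^sup>*\<close> (componentwise conjugate), and
  the quotient \<open>\<langle>w,w\<rangle>/\<parallel>w\<parallel>\<^sup>2\<close> is invariant under scaling and under \<open>u \<mapsto> J u\<^sup>*\<close>, so it equals
  \<open>\<langle>z,z\<rangle>/\<parallel>z\<parallel>\<^sup>2\<close>. Since \<open>det J = 1\<close>, Lagrange's identity holds for \<open>\<langle>-,-\<rangle>\<close> as well:
  \<open>\<langle>z,z\<rangle> = \<langle>x,x\<rangle>\<langle>y,y\<rangle> - |\<langle>x,y\<rangle>|\<^sup>2 = -|\<langle>x,y\<rangle>|\<^sup>2\<close> for null \<open>x, y\<close>, while the Euclidean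
  Lagrange identity gives \<open>\<parallel>z\<parallel>\<^sup>2 = \<parallel>x \<and> y\<parallel>\<^sup>2\<close>.\<close>

lemma numeral_3_eq_0 [simp]: "(3 :: 3) = 0" and numeral_4_eq_1 [simp]: "(4 :: 3) = 1"
  by simp_all

lemma index3_cases: "(i :: 3) = 0 \<or> i = 1 \<or> i = 2"
  using exhaust_3[of i] by auto

lemma sum_UNIV_3: "sum f (UNIV :: 3 set) = f 0 + f 1 + f 2"
  using sum_3[of f] by (simp add: ac_simps)

lemma vec3_eq_iff: "(u :: 'a^3) = v \<longleftrightarrow> u$0 = v$0 \<and> u$1 = v$1 \<and> u$2 = v$2"
  using forall_3[of "\<lambda>i. u$i = v$i"] by (auto simp: vec_eq_iff)

lemma hdot_expand: "hdot u v = u$0 * cnj (v$0) + u$1 * cnj (v$1) + u$2 * cnj (v$2)"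
  by (simp add: hdot_def sum_UNIV_3)

lemma norm_sq_eq_hdot: "complex_of_real ((norm u)\<^sup>2) = hdot u u"
proof -
  have "(norm u)\<^sup>2 = (\<Sum>i\<in>UNIV. (cmod (u$i))\<^sup>2)"
    by (simp add: norm_vec_def L2_set_def sum_nonneg)
  then show ?thesis
    by (simp add: sum_UNIV_3 hdot_expand flip: complex_norm_square)
qed

lemma cnj_herm: "cnj (herm u v) = herm v u"
  by (simp add: herm_def mult.commute)

lemma herm_scale: "herm (a *s u) (b *s v) = a * cnj b * herm u v"
  by (simp add: herm_def algebra_simps)

lemma hdot_scale: "hdot (a *s u) (b *s v) = a * cnj b * hdot u v"
  by (simp add: hdot_expand algebra_simps)

definition ccross :: "complex^3 \<Rightarrow> complex^3 \<Rightarrow> complex^3" where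
  "ccross u v = (\<chi> i. u$(i+1) * v$(i+2) - u$(i+2) * v$(i+1))"

lemma ccross_nth [simp]:
  "ccross u v $ 0 = u$1 * v$2 - u$2 * v$1"
  "ccross u v $ 1 = u$2 * v$0 - u$0 * v$2"
  "ccross u v $ 2 = u$0 * v$1 - u$1 * v$0"
  by (simp_all add: ccross_def)

text \<open>\<open>lorentz_conj u = J u\<^sup>*\<close>, so that \<open>herm w u = \<Sum>i. w$i * lorentz_conj u $ i\<close> is bilinear.\<close>
definition lorentz_conj :: "complex^3 \<Rightarrow> complex^3" where
  "lorentz_conj u = (\<chi> i. if i = 0 then cnj (u$i) else - cnj (u$i))"

lemma lorentz_conj_nth [simp]:
  "lorentz_conj u $ 0 = cnj (u$0)"
  "lorentz_conj u $ 1 = - cnj (u$1)"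
  "lorentz_conj u $ 2 = - cnj (u$2)"
  by (simp_all add: lorentz_conj_def)

lemma ccross_eq_0_imp_scaled:
  assumes "v \<noteq> 0" and "ccross u v = 0"
  shows "\<exists>c. u = c *s v"
proof -
  have "u$1 * v$2 = u$2 * v$1" "u$2 * v$0 = u$0 * v$2" "u$0 * v$1 = u$1 * v$0"
    using assms(2) by (simp_all add: vec3_eq_iff)
  then have minors: "u$i * v$j = u$j * v$i" for i j
    using index3_cases[of i] index3_cases[of j] by auto
  obtain k where k: "v$k \<noteq> 0"
    using assms(1) by (auto simp: vec_eq_iff)
  have "u = (u$k / v$k) *s v"
    using k minors by (simp add: vec_eq_iff field_simps)
  then show ?thesis ..
qed

lemma wedge_norm_sq_eq_norm_ccross: "wedge_norm_sq u v = (norm (ccross u v))\<^sup>2"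
proof -
  have "complex_of_real (wedge_norm_sq u v) = complex_of_real ((norm (ccross u v))\<^sup>2)"
    unfolding wedge_norm_sq_def of_real_diff of_real_mult norm_sq_eq_hdot complex_norm_square
    by (simp add: hdot_expand) algebra
  then show ?thesis by (simp only: of_real_eq_iff)
qed

lemma herm_ccross_ccross:
  "herm (ccross u v) (ccross u v) = herm u u * herm v v - herm u v * herm v u"
  by (simp add: herm_def) algebra

lemma herm_lorentz_conj: "herm (lorentz_conj u) (lorentz_conj u) = herm u u"
  by (simp add: herm_def mult.commute)

lemma norm_lorentz_conj: "norm (lorentz_conj u) = norm u"
  by (simp add: norm_vec_def L2_set_def sum_UNIV_3)

text \<open>Because \<open>det J = 1\<close>, \<open>lorentz_conj (u \<times> v) = lorentz_conj u \<times> lorentz_conj v\<close>, and this is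
  the rule \<open>a \<times> (b \<times> c) = (a\<cdot>c) b - (a\<cdot>b) c\<close>.\<close>
lemma ccross_lorentz_conj_ccross:
  "ccross w (lorentz_conj (ccross u v)) = herm w v *s lorentz_conj u - herm w u *s lorentz_conj v"
  by (simp add: vec3_eq_iff herm_def) algebra

lemma proj_eq_if_ccross_eq_0:
  assumes "u \<noteq> 0" and "v \<noteq> 0" and "ccross u v = 0"
  shows "proj_eq u v"
proof -
  obtain c where "u = c *s v"
    using ccross_eq_0_imp_scaled assms(2,3) by blast
  moreover have "c \<noteq> 0"
    using assms(1) calculation by auto
  ultimately show ?thesis
    unfolding proj_eq_def by blast
qed

lemma herm_orthogonal_imp_scaled:
  assumes "herm w u = 0" and "herm w v = 0" and "ccross u v \<noteq> 0"
  shows "\<exists>c. w = c *s lorentz_conj (ccross u v)"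
proof (rule ccross_eq_0_imp_scaled)
  show "lorentz_conj (ccross u v) \<noteq> 0"
    using assms(3) norm_lorentz_conj by (metis norm_eq_zero)
  show "ccross w (lorentz_conj (ccross u v)) = 0"
    using assms(1,2) by (simp add: ccross_lorentz_conj_ccross)
qed

lemma herm_quotient_scale:
  assumes "c \<noteq> 0"
  shows "herm (c *s u) (c *s u) / complex_of_real ((norm (c *s u))\<^sup>2)
         = herm u u / complex_of_real ((norm u)\<^sup>2)"
  unfolding norm_sq_eq_hdot herm_scale hdot_scale using assms by simp

theorem lemma5p7:
  fixes x y w :: "complex^3"
  assumes "x \<in> S3_reps" and "y \<in> S3_reps" and "\<not> proj_eq x y"
    and "pi_rep x y w"
  shows "herm w w / complex_of_real ((norm w)\<^sup>2)
         = - complex_of_real ((cmod (herm x y))\<^sup>2 / wedge_norm_sq x y)"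
proof -
  have x: "x \<noteq> 0" "herm x x = 0" and y: "y \<noteq> 0" "herm y y = 0"
    using assms(1,2) by (auto simp: S3_reps_def)
  have w: "w \<noteq> 0" "herm w x = 0" "herm w y = 0"
    using assms(4) by (auto simp: pi_rep_def perp_reps_def)
  let ?z = "ccross x y"
  have "?z \<noteq> 0"
    using proj_eq_if_ccross_eq_0 x(1) y(1) assms(3) by blast
  then obtain c where c: "w = c *s lorentz_conj ?z"
    using herm_orthogonal_imp_scaled w(2,3) by blast
  with w(1) have "c \<noteq> 0" by auto
  have "herm w w / complex_of_real ((norm w)\<^sup>2)
      = herm ?z ?z / complex_of_real ((norm ?z)\<^sup>2)"
    by (simp only: c herm_quotient_scale[OF \<open>c \<noteq> 0\<close>] herm_lorentz_conj norm_lorentz_conj)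
  also have "\<dots> = - (herm x y * cnj (herm x y)) / complex_of_real (wedge_norm_sq x y)"
    by (simp add: herm_ccross_ccross x(2) y(2) cnj_herm wedge_norm_sq_eq_norm_ccross)
  also have "\<dots> = - complex_of_real ((cmod (herm x y))\<^sup>2 / wedge_norm_sq x y)"
    unfolding of_real_divide complex_norm_square by simp
  finally show ?thesis .
qed

end
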